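(* Let $X$ be a compact metric space and $\tau_1,\dots,\tau_N:X\to X$ continuous maps with $X=\bigcup_{i=1}^N\tau_i(X)$, and suppose the system has an encoding map $\pi:\Omega\to X$ which is measurable from the cylinder $\sigma$-algebra of $\Omega$ to the Borel $\sigma$-algebra of $X$. Let $p_1,\dots,p_N>0$ with $\sum_ip_i=1$ and let $\mu_{(p)}$ be the Bernoulli measure on $\Omega$. Then $\nu:=\mu_{(p)}\circ\pi^{-1}$ satisfies $$\nu=\sum_{i=1}^Np_i\,\nu\circ\tau_i^{-1},$$ and the support of $\nu$ equals $X$.
   Context: $\Omega=\{1,\dots,N\}^{\mathbb{N}}$ with the $\sigma$-algebra generated by cylinder sets. An encoding: for every $\omega=(\omega_1\omega_2\dots)\in\Omega$, the set $\bigcap_{n\ge1}\tau_{\omega_1}\tau_{\omega_2}\cdots\tau_{\omega_n}(X)$ is a singleton $\{\pi(\omega)\}$. The Bernoulli measure $\mu_{(p)}$ is the unique probability measure on $\Omega$ with $\mu_{(p)}(\{\eta:\eta_1=\omega_1,\dots,\eta_n=\omega_n\})=p_{\omega_1}\cdots p_{\omega_n}$. *)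

theory Defs
  imports "HOL-Probability.Probability"
begin

text \<open>Symbols are indexed by 0..<N (the paper uses 1..N).
  The symbolic space Omega = {0..<N}^nat with the cylinder sigma-algebra.\<close>
definition Omega_space :: "nat \<Rightarrow> (nat \<Rightarrow> nat) measure" where
  "Omega_space N = PiM UNIV (\<lambda>_. count_space {..<N})"

definition bernoulli_measure :: "nat \<Rightarrow> (nat \<Rightarrow> real) \<Rightarrow> (nat \<Rightarrow> nat) measure" where
  "bernoulli_measure N p = PiM UNIV (\<lambda>_. point_measure {..<N} (\<lambda>i. ennreal (p i)))"

fun word_map :: "(nat \<Rightarrow> 'a \<Rightarrow> 'a) \<Rightarrow> (nat \<Rightarrow> nat) \<Rightarrow> nat \<Rightarrow> 'a \<Rightarrow> 'a" where
  "word_map tau w 0 = id"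
| "word_map tau w (Suc n) = word_map tau w n \<circ> tau (w n)"

definition is_encoding :: "'a set \<Rightarrow> nat \<Rightarrow> (nat \<Rightarrow> 'a \<Rightarrow> 'a) \<Rightarrow> ((nat \<Rightarrow> nat) \<Rightarrow> 'a) \<Rightarrow> bool" where
  "is_encoding X N tau \<pi> \<longleftrightarrow>
     (\<forall>\<omega> \<in> space (Omega_space N). (\<Inter>n\<in>{1..}. word_map tau \<omega> n ` X) = {\<pi> \<omega>})"

definition measure_support :: "'a::topological_space set \<Rightarrow> 'a measure \<Rightarrow> 'a set" where
  "measure_support X \<nu> = {x \<in> X. \<forall>U. open U \<and> x \<in> U \<longrightarrow> emeasure \<nu> (U \<inter> X) > 0}"

end

theory Submission
  imports Defs
begin

(* Self-similarity: the encoding intertwines prepending a letter with the maps,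
   pi (case_nat s omega) = tau_s (pi omega), and the Bernoulli measure splits according
   to the first letter with weights p_s.
   Full support: since X is the union of the images tau_i X, every x in X has an address
   omega with pi omega = x, obtained by choosing preimages backwards. The compact sets
   tau_{omega_1} ... tau_{omega_n} X decrease to {x}, so one of them lies in a given open
   neighbourhood U of x; then pi maps the whole cylinder [omega_1 ... omega_n], whose
   measure is p_{omega_1} ... p_{omega_n} > 0, into U. *)

lemma decseq_compact_subset_open:
  fixes W :: "nat \<Rightarrow> 'a::t2_space set"
  assumes "decseq W" and "\<And>n. compact (W n)" and "open U" and "(\<Inter>n. W n) \<subseteq> U"
  shows "\<exists>n. W n \<subseteq> U"
proof (rule ccontr)
  assume not_inside: "\<nexists>n. W n \<subseteq> U"
  have "(W 0 \<inter> - U) \<inter> (\<Inter>n\<in>UNIV. W n) \<noteq> {}"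
  proof (rule compact_imp_fip_image)
    show "compact (W 0 \<inter> - U)"
      using assms(2,3) by (intro compact_Int_closed) auto
    show "closed (W n)" for n
      using assms(2) by (rule compact_imp_closed)
  next
    fix I :: "nat set" assume "finite I"
    define m where "m = Max (insert 0 I)"
    have "n \<le> m" if "n \<in> insert 0 I" for n
      using \<open>finite I\<close> that by (simp add: m_def)
    then have "W m \<subseteq> W 0 \<inter> (\<Inter>n\<in>I. W n)"
      using \<open>decseq W\<close> by (auto simp: decseq_def)
    then show "(W 0 \<inter> - U) \<inter> (\<Inter>n\<in>I. W n) \<noteq> {}"
      using not_inside by blast
  qed
  then show False
    using assms(4) by blast
qed

lemma word_map_case_nat:
  "word_map tau (case_nat s \<omega>) (Suc n) = tau s \<circ> word_map tau \<omega> n"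
proof -
  have "word_map tau (case_nat s \<omega>) (Suc n) x = tau s (word_map tau \<omega> n x)" for x
    by (induction n arbitrary: x) auto
  then show ?thesis
    by (auto simp del: word_map.simps)
qed

lemma word_map_cong_prefix:
  "(\<And>i. i < n \<Longrightarrow> \<eta> i = \<omega> i) \<Longrightarrow> word_map tau \<eta> n = word_map tau \<omega> n"
  by (induction n) auto

lemma continuous_on_word_map:
  assumes "\<And>k. continuous_on X (tau (\<omega> k))" and "\<And>k. tau (\<omega> k) ` X \<subseteq> X"
  shows "continuous_on X (word_map tau \<omega> n)"
proof (induction n)
  case (Suc n)
  have "continuous_on X (word_map tau \<omega> n \<circ> tau (\<omega> n))"
    using assms by (intro continuous_on_compose continuous_on_subset[OF Suc]) auto
  then show ?case
    by simp
qed (simp add: continuous_on_id)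

lemma decseq_word_map_image:
  assumes "\<And>k. tau (\<omega> k) ` X \<subseteq> X"
  shows "decseq (\<lambda>n. word_map tau \<omega> n ` X)"
  using assms by (intro decseq_SucI) (auto simp: image_comp[symmetric])

lemma space_Omega_space: "space (Omega_space N) = {\<omega>. \<forall>n. \<omega> n < N}"
  by (auto simp: Omega_space_def space_PiM PiE_def extensional_def)

lemma space_bernoulli_measure: "space (bernoulli_measure N p) = {\<omega>. \<forall>n. \<omega> n < N}"
  by (auto simp: bernoulli_measure_def space_PiM space_point_measure PiE_def extensional_def)

lemma sets_bernoulli_measure: "sets (bernoulli_measure N p) = sets (Omega_space N)"
  unfolding bernoulli_measure_def Omega_space_def
  by (rule sets_PiM_cong) (auto simp: sets_point_measure)

lemma measurable_bernoulli_measure: "measurable (bernoulli_measure N p) M = measurable (Omega_space N) M"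
  by (rule measurable_cong_sets[OF sets_bernoulli_measure refl])

lemma is_encodingD:
  "is_encoding X N tau \<pi> \<Longrightarrow> \<omega> \<in> space (Omega_space N) \<Longrightarrow>
    (\<Inter>n\<in>{1..}. word_map tau \<omega> n ` X) = {\<pi> \<omega>}"
  by (simp add: is_encoding_def)

lemma encoding_mem_word_image:
  assumes enc: "is_encoding X N tau \<pi>" and into: "\<And>i. i < N \<Longrightarrow> tau i ` X \<subseteq> X"
    and \<omega>: "\<omega> \<in> space (Omega_space N)"
  shows "\<pi> \<omega> \<in> word_map tau \<omega> n ` X"
proof -
  have "\<pi> \<omega> \<in> (\<Inter>n\<in>{1..}. word_map tau \<omega> n ` X)"
    unfolding is_encodingD[OF enc \<omega>] by simp
  then have in_images: "\<pi> \<omega> \<in> word_map tau \<omega> m ` X" if "1 \<le> m" for m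
    using that by blast
  show ?thesis
  proof (cases "n = 0")
    case True
    have "word_map tau \<omega> 1 ` X \<subseteq> X"
      using into \<omega> by (simp add: space_Omega_space)
    then show ?thesis
      using in_images[of 1] True by auto
  qed (use in_images in auto)
qed

lemma encoding_case_nat:
  assumes enc: "is_encoding X N tau \<pi>" and into: "\<And>i. i < N \<Longrightarrow> tau i ` X \<subseteq> X"
    and \<omega>: "\<omega> \<in> space (Omega_space N)" and "s < N"
  shows "\<pi> (case_nat s \<omega>) = tau s (\<pi> \<omega>)"
proof -
  have s\<omega>: "case_nat s \<omega> \<in> space (Omega_space N)"
    using \<omega> \<open>s < N\<close> by (auto simp: space_Omega_space split: nat.split)
  have "tau s (\<pi> \<omega>) \<in> word_map tau (case_nat s \<omega>) n ` X" if n: "1 \<le> n" for n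
  proof -
    obtain m where m: "n = Suc m"
      using n by (cases n) auto
    have "\<pi> \<omega> \<in> word_map tau \<omega> m ` X"
      using enc into \<omega> by (rule encoding_mem_word_image)
    then show ?thesis
      unfolding m word_map_case_nat image_comp[symmetric] by blast
  qed
  then have "tau s (\<pi> \<omega>) \<in> (\<Inter>n\<in>{1..}. word_map tau (case_nat s \<omega>) n ` X)"
    by simp
  then show ?thesis
    unfolding is_encodingD[OF enc s\<omega>] by simp
qed

lemma encoding_surj:
  assumes enc: "is_encoding X N tau \<pi>" and cover: "X \<subseteq> (\<Union>i<N. tau i ` X)" and "x \<in> X"
  shows "\<exists>\<omega>\<in>space (Omega_space N). \<pi> \<omega> = x"
proof -
  have "\<forall>y\<in>X. \<exists>i. i < N \<and> y \<in> tau i ` X"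
    using cover by blast
  then obtain a where a: "\<forall>y\<in>X. a y < N \<and> y \<in> tau (a y) ` X"
    by (rule bchoice[THEN exE]) blast
  then have "\<forall>y\<in>X. \<exists>z. z \<in> X \<and> tau (a y) z = y"
    by (metis imageE)
  then obtain b where b: "\<forall>y\<in>X. b y \<in> X \<and> tau (a y) (b y) = y"
    by (rule bchoice[THEN exE]) blast
  define xs where "xs = rec_nat x (\<lambda>_. b)"
  define \<omega> where "\<omega> n = a (xs n)" for n
  have xs_in: "xs n \<in> X" for n
    by (induction n) (simp_all add: xs_def \<open>x \<in> X\<close> b)
  have backward_orbit: "word_map tau \<omega> n (xs n) = x" for n
  proof (induction n)
    case (Suc n)
    have "tau (\<omega> n) (xs (Suc n)) = xs n"
      using b xs_in[of n] by (simp add: \<omega>_def xs_def)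
    then show ?case
      using Suc by simp
  qed (simp add: xs_def)
  have "x \<in> word_map tau \<omega> n ` X" for n
    using xs_in[of n] by (rule rev_image_eqI) (simp add: backward_orbit)
  moreover have \<omega>_space: "\<omega> \<in> space (Omega_space N)"
    using bspec[OF a xs_in] by (simp add: \<omega>_def space_Omega_space)
  ultimately have "x \<in> {\<pi> \<omega>}"
    unfolding is_encodingD[OF enc \<omega>_space, symmetric] by blast
  then show ?thesis
    using \<omega>_space by blast
qed

lemma encoding_cylinder_subset_open:
  fixes X :: "'a::t2_space set"
  assumes "compact X" and cont: "\<And>i. i < N \<Longrightarrow> continuous_on X (tau i)"
    and into: "\<And>i. i < N \<Longrightarrow> tau i ` X \<subseteq> X" and enc: "is_encoding X N tau \<pi>"
    and \<omega>: "\<omega> \<in> space (Omega_space N)" and "open U" and "\<pi> \<omega> \<in> U"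
  shows "\<exists>n. \<forall>\<eta>\<in>space (Omega_space N). (\<forall>i<n. \<eta> i = \<omega> i) \<longrightarrow> \<pi> \<eta> \<in> U"
proof -
  have letters: "\<And>k. \<omega> k < N"
    using \<omega> by (simp add: space_Omega_space)
  have "(\<Inter>n. word_map tau \<omega> n ` X) \<subseteq> (\<Inter>n\<in>{1..}. word_map tau \<omega> n ` X)"
    by blast
  also have "\<dots> \<subseteq> U"
    using is_encodingD[OF enc \<omega>] \<open>\<pi> \<omega> \<in> U\<close> by simp
  finally obtain n where n: "word_map tau \<omega> n ` X \<subseteq> U"
    using decseq_compact_subset_open[OF decseq_word_map_image _ \<open>open U\<close>]
      compact_continuous_image[OF continuous_on_word_map \<open>compact X\<close>] letters cont into
    by metis
  have "\<pi> \<eta> \<in> U" if \<eta>: "\<eta> \<in> space (Omega_space N)" and prefix: "\<forall>i<n. \<eta> i = \<omega> i" for \<eta>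
  proof -
    have "\<pi> \<eta> \<in> word_map tau \<eta> n ` X"
      using enc into \<eta> by (rule encoding_mem_word_image)
    moreover have "word_map tau \<eta> n = word_map tau \<omega> n"
      using prefix by (intro word_map_cong_prefix) simp
    ultimately show ?thesis
      using n by auto
  qed
  then show ?thesis
    by (intro exI[of _ n]) blast
qed

locale bernoulli_weights =
  fixes N :: nat and p :: "nat \<Rightarrow> real"
  assumes weights_pos: "\<And>i. i < N \<Longrightarrow> 0 < p i"
    and weights_sum: "(\<Sum>i<N. p i) = 1"
begin

lemma prob_space_weights: "prob_space (point_measure {..<N} (\<lambda>i. ennreal (p i)))"
proof (rule prob_space_point_measure)
  show "(\<Sum>i<N. ennreal (p i)) = 1"
    using weights_pos weights_sum by (subst sum_ennreal) (auto intro: less_imp_le)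
qed auto

sublocale sequence_space "point_measure {..<N} (\<lambda>i. ennreal (p i))"
  by (simp add: sequence_space_def product_prob_space_def product_sigma_finite_def
      prob_space_imp_sigma_finite prob_space_weights product_prob_space_axioms_def)

lemma emeasure_bernoulli_cylinder:
  assumes "\<And>i. i < n \<Longrightarrow> \<omega> i < N"
  shows "emeasure (bernoulli_measure N p) {\<eta> \<in> space (bernoulli_measure N p). \<forall>i<n. \<eta> i = \<omega> i}
    = ennreal (\<Prod>i<n. p (\<omega> i))"
proof -
  have "emeasure (bernoulli_measure N p) {\<eta> \<in> space (bernoulli_measure N p). \<forall>i\<in>{..<n}. \<eta> i \<in> {\<omega> i}}
      = (\<Prod>i<n. emeasure (point_measure {..<N} (\<lambda>i. ennreal (p i))) {\<omega> i})"
    unfolding bernoulli_measure_def using assms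
    by (intro emeasure_PiM_Collect) (auto simp: sets_point_measure)
  also have "\<dots> = (\<Prod>i<n. ennreal (p (\<omega> i)))"
    using assms by (intro prod.cong refl) (simp add: emeasure_point_measure_finite)
  also have "\<dots> = ennreal (\<Prod>i<n. p (\<omega> i))"
    using assms weights_pos by (intro prod_ennreal) (simp add: less_imp_le)
  finally show ?thesis
    by (simp add: Ball_def)
qed

lemma emeasure_bernoulli_case_nat:
  assumes B: "B \<in> sets (bernoulli_measure N p)"
  shows "emeasure (bernoulli_measure N p) B = (\<Sum>s<N. ennreal (p s) *
    emeasure (bernoulli_measure N p) (case_nat s -` B \<inter> space (bernoulli_measure N p)))"
proof -
  let ?M = "point_measure {..<N} (\<lambda>i. ennreal (p i))"
  let ?B = "bernoulli_measure N p"
  let ?f = "\<lambda>(s, \<omega>). case_nat s \<omega>"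
  have f: "?f \<in> ?M \<Otimes>\<^sub>M ?B \<rightarrow>\<^sub>M ?B"
    unfolding bernoulli_measure_def by measurable
  have Z: "?f -` B \<inter> space (?M \<Otimes>\<^sub>M ?B) \<in> sets (?M \<Otimes>\<^sub>M ?B)"
    using measurable_sets[OF f B] .
  have "emeasure ?B B = emeasure (distr (?M \<Otimes>\<^sub>M ?B) ?B ?f) B"
    unfolding bernoulli_measure_def by (subst PiM_iter) rule
  also have "\<dots> = emeasure (?M \<Otimes>\<^sub>M ?B) (?f -` B \<inter> space (?M \<Otimes>\<^sub>M ?B))"
    using emeasure_distr[OF f B] .
  also have "\<dots> = (\<integral>\<^sup>+s. emeasure ?B (Pair s -` (?f -` B \<inter> space (?M \<Otimes>\<^sub>M ?B))) \<partial>?M)"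
    unfolding bernoulli_measure_def
    by (rule P.emeasure_pair_measure_alt) (use Z in \<open>simp add: bernoulli_measure_def\<close>)
  also have "\<dots> = (\<Sum>s<N. ennreal (p s) * emeasure ?B (case_nat s -` B \<inter> space ?B))"
    by (auto simp: nn_integral_point_measure_finite space_pair_measure space_point_measure
        intro!: sum.cong arg_cong2[where f = "(*)"] arg_cong2[where f = emeasure])
  finally show ?thesis .
qed

lemma emeasure_distr_encoding_self_similar:
  fixes X :: "'a::topological_space set"
  assumes cont: "\<And>i. i < N \<Longrightarrow> continuous_on X (tau i)"
    and into: "\<And>i. i < N \<Longrightarrow> tau i ` X \<subseteq> X" and enc: "is_encoding X N tau \<pi>"
    and meas: "\<pi> \<in> Omega_space N \<rightarrow>\<^sub>M restrict_space borel X"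
    and A: "A \<in> sets (restrict_space borel X)"
  shows "emeasure (distr (bernoulli_measure N p) (restrict_space borel X) \<pi>) A =
    (\<Sum>i<N. ennreal (p i) * emeasure (distr (bernoulli_measure N p) (restrict_space borel X) \<pi>) (tau i -` A \<inter> X))"
proof -
  let ?B = "bernoulli_measure N p"
  let ?\<nu> = "distr ?B (restrict_space borel X) \<pi>"
  have \<pi>: "\<pi> \<in> ?B \<rightarrow>\<^sub>M restrict_space borel X"
    using meas by (simp add: measurable_bernoulli_measure)
  have tau_preimage: "tau i -` A \<inter> X \<in> sets (restrict_space borel X)" if "i < N" for i
  proof -
    have "tau i \<in> restrict_space borel X \<rightarrow>\<^sub>M restrict_space borel X"
      using borel_measurable_continuous_on_restrict[OF cont[OF that]] into[OF that]
      by (intro measurable_restrict_space2) (auto simp: space_restrict_space)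
    from measurable_sets[OF this A] show ?thesis
      by (simp add: space_restrict_space)
  qed
  have shifted_preimage: "case_nat s -` (\<pi> -` A \<inter> space ?B) \<inter> space ?B = \<pi> -` (tau s -` A \<inter> X) \<inter> space ?B"
    if "s < N" for s
  proof -
    have "\<pi> \<omega> \<in> X" if "\<omega> \<in> space (Omega_space N)" for \<omega>
      using encoding_mem_word_image[OF enc into that, of 0] by simp
    then show ?thesis
      using \<open>s < N\<close> encoding_case_nat[OF enc into _ \<open>s < N\<close>]
      by (auto simp: space_bernoulli_measure space_Omega_space split: nat.split)
  qed
  have "emeasure ?\<nu> A = emeasure ?B (\<pi> -` A \<inter> space ?B)"
    by (rule emeasure_distr[OF \<pi> A])
  also have "\<dots> = (\<Sum>s<N. ennreal (p s) * emeasure ?B (case_nat s -` (\<pi> -` A \<inter> space ?B) \<inter> space ?B))"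
    using measurable_sets[OF \<pi> A] by (rule emeasure_bernoulli_case_nat)
  also have "\<dots> = (\<Sum>s<N. ennreal (p s) * emeasure ?\<nu> (tau s -` A \<inter> X))"
    using shifted_preimage emeasure_distr[OF \<pi> tau_preimage] by simp
  finally show ?thesis .
qed

lemma measure_support_distr_encoding:
  fixes X :: "'a::t2_space set"
  assumes "compact X" and cont: "\<And>i. i < N \<Longrightarrow> continuous_on X (tau i)"
    and into: "\<And>i. i < N \<Longrightarrow> tau i ` X \<subseteq> X" and cover: "X \<subseteq> (\<Union>i<N. tau i ` X)"
    and enc: "is_encoding X N tau \<pi>" and meas: "\<pi> \<in> Omega_space N \<rightarrow>\<^sub>M restrict_space borel X"
  shows "measure_support X (distr (bernoulli_measure N p) (restrict_space borel X) \<pi>) = X"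
proof
  let ?B = "bernoulli_measure N p"
  let ?\<nu> = "distr ?B (restrict_space borel X) \<pi>"
  have \<pi>: "\<pi> \<in> ?B \<rightarrow>\<^sub>M restrict_space borel X"
    using meas by (simp add: measurable_bernoulli_measure)
  show "X \<subseteq> measure_support X ?\<nu>"
  proof
    fix x assume "x \<in> X"
    then obtain \<omega> where \<omega>: "\<omega> \<in> space (Omega_space N)" and "\<pi> \<omega> = x"
      using encoding_surj[OF enc cover] by blast
    have "0 < emeasure ?\<nu> (U \<inter> X)" if "open U" and "x \<in> U" for U
    proof -
      have "\<pi> \<omega> \<in> U"
        using \<open>x \<in> U\<close> \<open>\<pi> \<omega> = x\<close> by simp
      then obtain n where n: "\<forall>\<eta>\<in>space (Omega_space N). (\<forall>i<n. \<eta> i = \<omega> i) \<longrightarrow> \<pi> \<eta> \<in> U"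
        using encoding_cylinder_subset_open[OF \<open>compact X\<close> cont into enc \<omega> \<open>open U\<close>] by blast
      have UX: "U \<inter> X \<in> sets (restrict_space borel X)"
        using \<open>open U\<close> by (auto simp: sets_restrict_space)
      have letters: "\<And>i. \<omega> i < N"
        using \<omega> by (simp add: space_Omega_space)
      have "0 < ennreal (\<Prod>i<n. p (\<omega> i))"
        using weights_pos letters by (simp add: prod_pos)
      also have "\<dots> = emeasure ?B {\<eta> \<in> space ?B. \<forall>i<n. \<eta> i = \<omega> i}"
        using letters by (rule emeasure_bernoulli_cylinder[symmetric])
      also have "\<dots> \<le> emeasure ?B (\<pi> -` (U \<inter> X) \<inter> space ?B)"
      proof (rule emeasure_mono[OF subsetI measurable_sets[OF \<pi> UX]])
        fix \<eta> assume \<eta>: "\<eta> \<in> {\<eta> \<in> space ?B. \<forall>i<n. \<eta> i = \<omega> i}"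
        then have "\<pi> \<eta> \<in> U"
          using n by (simp add: space_bernoulli_measure space_Omega_space)
        moreover have "\<pi> \<eta> \<in> X"
          using measurable_space[OF \<pi>] \<eta> by (auto simp: space_restrict_space)
        ultimately show "\<eta> \<in> \<pi> -` (U \<inter> X) \<inter> space ?B"
          using \<eta> by simp
      qed
      also have "\<dots> = emeasure ?\<nu> (U \<inter> X)"
        by (rule emeasure_distr[OF \<pi> UX, symmetric])
      finally show ?thesis .
    qed
    then show "x \<in> measure_support X ?\<nu>"
      using \<open>x \<in> X\<close> by (simp add: measure_support_def)
  qed
qed (auto simp: measure_support_def)

end

theorem lemma6p1:
  fixes X :: "'a::metric_space set"
    and N :: nat
    and tau :: "nat \<Rightarrow> 'a \<Rightarrow> 'a"
    and \<pi> :: "(nat \<Rightarrow> nat) \<Rightarrow> 'a"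
    and p :: "nat \<Rightarrow> real"
  assumes "compact X"
    and "\<And>i. i < N \<Longrightarrow> continuous_on X (tau i)"
    and "\<And>i. i < N \<Longrightarrow> tau i ` X \<subseteq> X"
    and "X = (\<Union>i<N. tau i ` X)"
    and "is_encoding X N tau \<pi>"
    and "\<pi> \<in> Omega_space N \<rightarrow>\<^sub>M restrict_space borel X"
    and "\<And>i. i < N \<Longrightarrow> p i > 0"
    and "(\<Sum>i<N. p i) = 1"
  shows "let \<nu> = distr (bernoulli_measure N p) (restrict_space borel X) \<pi> in
           (\<forall>A \<in> sets \<nu>. emeasure \<nu> A = (\<Sum>i<N. ennreal (p i) * emeasure \<nu> (tau i -` A \<inter> X)))
         \<and> measure_support X \<nu> = X"
proof -
  interpret bernoulli_weights N p
    using assms(7,8) by unfold_locales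
  show ?thesis
    unfolding Let_def
    using emeasure_distr_encoding_self_similar[OF assms(2,3,5,6)]
      measure_support_distr_encoding[OF assms(1,2,3) _ assms(5,6)] assms(4)
    by simp
qed

end
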